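(* For all $\Gamma\subseteq Form$ and $\varphi\in Form$: $\Gamma\vdash_{\mathbf K^p}\varphi$ implies $\Gamma\models_{\mathcal C_{P-}}\varphi$; $\Gamma\vdash_{\mathbf T^p}\varphi$ implies $\Gamma\models_{\mathcal C_{re}}\varphi$; and for each $\clubsuit\in\{\mathbf B^p,\mathbf V,\mathbf{KB4}^p,\mathbf I,\mathbf O,\mathbf C\}$, $\Gamma\vdash_\clubsuit\varphi$ implies $\Gamma\models_{\mathcal C_\clubsuit}\varphi$.
   Context: Fix a countable set $P0$ of propositional variables; $Form$: $\varphi::=p\mid\bot\mid(\varphi\wedge\varphi)\mid(\varphi\to\varphi)$ ($\wedge$ left-associative, binds tighter than $\to$). A model is $\mathfrak M=(W,R,V)$ with $W\neq\emptyset$, $R\subseteq W\times W$, $V:P0\to\wp(W)$; pointed model $(\mathfrak M,s)$, $s\in W$. Satisfaction: $\bot$ never true; $p$ true at $s$ iff $s\in V(p)$; $\wedge$ pointwise; $\mathfrak M,s\models\varphi\to\psi$ iff for all $t$ with $sRt$, $\mathfrak M,t\models\varphi$ implies $\mathfrak M,t\models\psi$. For $X\subseteq W$: $-X=W\setminus X$, $R[X]=\{t:\exists s\in X,\ sRt\}$, $R^\Box(X)=\{s:\forall t\,(sRt\Rightarrow t\in X)\}$. A proposition of $(W,R)$ is $X\subseteq W$ with $R[X]\cap R^\Box(R[X])\subseteq X$; an interpretation is a model with every $V(p)$ a proposition. Classes of models: $\mathcal D_{\mathbf K^p}$ all interpretations; $\mathcal D_{\mathbf T^p}$ reflexive interpretations;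 $\mathcal D_{\mathbf B^p}$ symmetric; $\mathcal D_{\mathbf V}$ transitive; $\mathcal D_{\mathbf{KB4}^p}$ symmetric and transitive; $\mathcal D_{\mathbf I}$ reflexive and transitive; $\mathcal D_{\mathbf O}$ reflexive and symmetric; $\mathcal D_{\mathbf C}$ reflexive, symmetric and transitive interpretations; $\mathcal D_{P-}$ the models with $V(p)\subseteq R^\Box(-R^\Box(\emptyset)\cup V(p))$ for all $p$; $\mathcal D_{re}$ all reflexive models. $\mathcal C_\clubsuit=\{(\mathfrak M,s):\mathfrak M\in\mathcal D_\clubsuit,\ s\in\mathfrak M\}$. $\Gamma\models_{\mathcal C}\varphi$ iff for every $(\mathfrak M,s)\in\mathcal C$, if $\mathfrak M,s$ satisfies all of $\Gamma$ then $\mathfrak M,s\models\varphi$. Sequents are pairs $(\Gamma,\varphi)$, $\Gamma\subseteq Form$ arbitrary; $Sqt$ the set of them. For $\vdash\subseteq Sqt$, $\Gamma\vdash\varphi$ means $(\Gamma,\varphi)\in\vdash$, $\psi\vdash\varphi$ means $\{\psi\}\vdash\varphi$, $\vdash\varphi$ means $\emptyset\vdash\varphi$. Rules (for all $\Gamma,\Delta\subseteq Form$, $p\in P0$, formulas): (A) $\Gamma\cup\{\varphi\}\vdash\varphi$; (Mon) $\Gamma\subseteq\Delta$, $\Gamma\vdash\varphi\Rightarrow\Delta\vdash\varphi$; (Cut) $\Gamma\cup\{\psi\}\vdash\varphi$, $\Delta\vdash\psi\Rightarrow\Gamma\cup\Delta\vdash\varphi$; ($\bot$) $\bot\vdash\varphi$;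 ($\wedge$I) $\{\varphi,\psi\}\vdash\varphi\wedge\psi$; ($\wedge$E) $\varphi\wedge\psi\vdash\varphi$, $\varphi\wedge\psi\vdash\psi$; ($\to$0) $\vdash\varphi\to\varphi$; ($\to$1) $\Gamma\vdash\varphi\Rightarrow\{\psi\to\chi:\chi\in\Gamma\}\vdash\psi\to\varphi$; ($\to$2) $\{\varphi\to\psi,\psi\to\chi\}\vdash\varphi\to\chi$; (Refl) $\{\varphi,\varphi\to\psi\}\vdash\psi$; (Tran) $\varphi\to\psi\vdash(\bot\to\bot)\to(\varphi\to\psi)$; (Sym1) $\Gamma\cup\{\psi\}\vdash\chi$ and $\Gamma\cup\{(\varphi\to\psi)\to\bot\}\vdash\chi\Rightarrow\Gamma\cup\{\varphi\}\vdash\chi$; (Sym2) $\{\alpha\wedge\psi\to\chi,\alpha\wedge((\varphi\to\psi)\to\bot)\to\chi\}\vdash\alpha\wedge\varphi\to\chi$; (Prop$^-$) $p\vdash((\bot\to\bot)\to\bot)\to p$; (Prop$_{tr}$) $p\vdash(\bot\to\bot)\to p$; (Prop$_{sy}$) $p\vdash((p\to\bot)\to\bot)\to p$. Let BASE = (A),(Mon),(Cut),($\bot$),($\wedge$I),($\wedge$E),($\to$0),($\to$1),($\to$2). Each $\vdash_\clubsuit$ is the smallest relation $\subseteq Sqt$ satisfying BASE plus: $\mathbf K^p$: (Prop$^-$); $\mathbf T^p$: (Refl),(Prop$^-$); $\mathbf B^p$: (Sym1),(Sym2),(Prop$_{sy}$); $\mathbf V$: (Tran),(Prop$_{tr}$);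 $\mathbf{KB4}^p$: (Tran),(Sym1),(Sym2),(Prop$_{tr}$); $\mathbf I$: (Refl),(Tran),(Prop$_{tr}$); $\mathbf O$: (Refl),(Sym1),(Sym2),(Prop$_{sy}$); $\mathbf C$: (Refl),(Tran),(Sym1),(Sym2),(Prop$_{tr}$). *)

theory Defs
  imports Main
begin

datatype form = Var nat | Bot | Conj form form | Imp form form

datatype logic = Kp | Tp | Bp | Vl | KB4p | Il | Ol | Cl

definition Top :: form where "Top = Imp Bot Bot"

fun has_refl :: "logic \<Rightarrow> bool" where
  "has_refl L = (L \<in> {Tp, Il, Ol, Cl})"
fun has_tran :: "logic \<Rightarrow> bool" where
  "has_tran L = (L \<in> {Vl, KB4p, Il, Cl})"
fun has_sym :: "logic \<Rightarrow> bool" where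
  "has_sym L = (L \<in> {Bp, KB4p, Ol, Cl})"
fun has_prop_minus :: "logic \<Rightarrow> bool" where
  "has_prop_minus L = (L \<in> {Kp, Tp})"
fun has_prop_tr :: "logic \<Rightarrow> bool" where
  "has_prop_tr L = (L \<in> {Vl, KB4p, Il, Cl})"
fun has_prop_sy :: "logic \<Rightarrow> bool" where
  "has_prop_sy L = (L \<in> {Bp, Ol})"

inductive deriv :: "logic \<Rightarrow> form set \<Rightarrow> form \<Rightarrow> bool" for L where
  A: "deriv L (\<Gamma> \<union> {\<phi>}) \<phi>"
| Mon: "\<Gamma> \<subseteq> \<Delta> \<Longrightarrow> deriv L \<Gamma> \<phi> \<Longrightarrow> deriv L \<Delta> \<phi>"
| Cut: "deriv L (\<Gamma> \<union> {\<psi>}) \<phi> \<Longrightarrow> deriv L \<Delta> \<psi> \<Longrightarrow> deriv L (\<Gamma> \<union> \<Delta>) \<phi>"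
| BotE: "deriv L {Bot} \<phi>"
| ConjI: "deriv L {\<phi>, \<psi>} (Conj \<phi> \<psi>)"
| ConjE1: "deriv L {Conj \<phi> \<psi>} \<phi>"
| ConjE2: "deriv L {Conj \<phi> \<psi>} \<psi>"
| Imp0: "deriv L {} (Imp \<phi> \<phi>)"
| Imp1: "deriv L \<Gamma> \<phi> \<Longrightarrow> deriv L {Imp \<psi> \<chi> | \<chi>. \<chi> \<in> \<Gamma>} (Imp \<psi> \<phi>)"
| Imp2: "deriv L {Imp \<phi> \<psi>, Imp \<psi> \<chi>} (Imp \<phi> \<chi>)"
| Refl: "has_refl L \<Longrightarrow> deriv L {\<phi>, Imp \<phi> \<psi>} \<psi>"
| Tran: "has_tran L \<Longrightarrow> deriv L {Imp \<phi> \<psi>} (Imp Top (Imp \<phi> \<psi>))"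
| Sym1: "has_sym L \<Longrightarrow> deriv L (\<Gamma> \<union> {\<psi>}) \<chi> \<Longrightarrow>
           deriv L (\<Gamma> \<union> {Imp (Imp \<phi> \<psi>) Bot}) \<chi> \<Longrightarrow> deriv L (\<Gamma> \<union> {\<phi>}) \<chi>"
| Sym2: "has_sym L \<Longrightarrow>
           deriv L {Imp (Conj \<alpha> \<psi>) \<chi>, Imp (Conj \<alpha> (Imp (Imp \<phi> \<psi>) Bot)) \<chi>}
                   (Imp (Conj \<alpha> \<phi>) \<chi>)"
| PropMinus: "has_prop_minus L \<Longrightarrow> deriv L {Var p} (Imp (Imp Top Bot) (Var p))"
| PropTr: "has_prop_tr L \<Longrightarrow> deriv L {Var p} (Imp Top (Var p))"
| PropSy: "has_prop_sy L \<Longrightarrow> deriv L {Var p} (Imp (Imp (Imp (Var p) Bot) Bot) (Var p))"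

definition is_model :: "'w set \<Rightarrow> ('w \<times> 'w) set \<Rightarrow> (nat \<Rightarrow> 'w set) \<Rightarrow> bool" where
  "is_model W R V \<longleftrightarrow> W \<noteq> {} \<and> R \<subseteq> W \<times> W \<and> (\<forall>p. V p \<subseteq> W)"

fun sat :: "'w set \<Rightarrow> ('w \<times> 'w) set \<Rightarrow> (nat \<Rightarrow> 'w set) \<Rightarrow> 'w \<Rightarrow> form \<Rightarrow> bool" where
  "sat W R V s (Var p) = (s \<in> V p)"
| "sat W R V s Bot = False"
| "sat W R V s (Conj \<phi> \<psi>) = (sat W R V s \<phi> \<and> sat W R V s \<psi>)"
| "sat W R V s (Imp \<phi> \<psi>) = (\<forall>t. (s, t) \<in> R \<longrightarrow> sat W R V t \<phi> \<longrightarrow> sat W R V t \<psi>)"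

definition Rimg :: "('w \<times> 'w) set \<Rightarrow> 'w set \<Rightarrow> 'w set" where
  "Rimg R X = {t. \<exists>s\<in>X. (s, t) \<in> R}"

definition Rbox :: "'w set \<Rightarrow> ('w \<times> 'w) set \<Rightarrow> 'w set \<Rightarrow> 'w set" where
  "Rbox W R X = {s \<in> W. \<forall>t. (s, t) \<in> R \<longrightarrow> t \<in> X}"

definition is_proposition :: "'w set \<Rightarrow> ('w \<times> 'w) set \<Rightarrow> 'w set \<Rightarrow> bool" where
  "is_proposition W R X \<longleftrightarrow> X \<subseteq> W \<and> Rimg R X \<inter> Rbox W R (Rimg R X) \<subseteq> X"

definition is_interpretation :: "'w set \<Rightarrow> ('w \<times> 'w) set \<Rightarrow> (nat \<Rightarrow> 'w set) \<Rightarrow> bool" where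
  "is_interpretation W R V \<longleftrightarrow> is_model W R V \<and> (\<forall>p. is_proposition W R (V p))"

definition D_Pminus :: "'w set \<Rightarrow> ('w \<times> 'w) set \<Rightarrow> (nat \<Rightarrow> 'w set) \<Rightarrow> bool" where
  "D_Pminus W R V \<longleftrightarrow> is_model W R V \<and>
     (\<forall>p. V p \<subseteq> Rbox W R ((W - Rbox W R {}) \<union> V p))"
definition D_re :: "'w set \<Rightarrow> ('w \<times> 'w) set \<Rightarrow> (nat \<Rightarrow> 'w set) \<Rightarrow> bool" where
  "D_re W R V \<longleftrightarrow> is_model W R V \<and> refl_on W R"
definition D_Bp :: "'w set \<Rightarrow> ('w \<times> 'w) set \<Rightarrow> (nat \<Rightarrow> 'w set) \<Rightarrow> bool" where
  "D_Bp W R V \<longleftrightarrow> is_interpretation W R V \<and> sym R"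
definition D_V :: "'w set \<Rightarrow> ('w \<times> 'w) set \<Rightarrow> (nat \<Rightarrow> 'w set) \<Rightarrow> bool" where
  "D_V W R V \<longleftrightarrow> is_interpretation W R V \<and> trans R"
definition D_KB4p :: "'w set \<Rightarrow> ('w \<times> 'w) set \<Rightarrow> (nat \<Rightarrow> 'w set) \<Rightarrow> bool" where
  "D_KB4p W R V \<longleftrightarrow> is_interpretation W R V \<and> sym R \<and> trans R"
definition D_I :: "'w set \<Rightarrow> ('w \<times> 'w) set \<Rightarrow> (nat \<Rightarrow> 'w set) \<Rightarrow> bool" where
  "D_I W R V \<longleftrightarrow> is_interpretation W R V \<and> refl_on W R \<and> trans R"
definition D_O :: "'w set \<Rightarrow> ('w \<times> 'w) set \<Rightarrow> (nat \<Rightarrow> 'w set) \<Rightarrow> bool" where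
  "D_O W R V \<longleftrightarrow> is_interpretation W R V \<and> refl_on W R \<and> sym R"
definition D_C :: "'w set \<Rightarrow> ('w \<times> 'w) set \<Rightarrow> (nat \<Rightarrow> 'w set) \<Rightarrow> bool" where
  "D_C W R V \<longleftrightarrow> is_interpretation W R V \<and> refl_on W R \<and> sym R \<and> trans R"

(* \<Gamma> \<Turnstile>_C \<phi> where C = {(M,s) : M \<in> D, s \<in> M} *)
definition conseq :: "('w set \<Rightarrow> ('w \<times> 'w) set \<Rightarrow> (nat \<Rightarrow> 'w set) \<Rightarrow> bool)
                      \<Rightarrow> form set \<Rightarrow> form \<Rightarrow> bool" where
  "conseq D \<Gamma> \<phi> \<longleftrightarrow> (\<forall>W R V s. D W R V \<longrightarrow> s \<in> W \<longrightarrow>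
      (\<forall>\<gamma>\<in>\<Gamma>. sat W R V s \<gamma>) \<longrightarrow> sat W R V s \<phi>)"

end

theory Submission
  imports Defs
begin

text \<open>Soundness is proved for all eight systems at once by rule induction on derivations,
relative to a model that satisfies exactly the frame conditions matching the extra rules of
the system. Each rule then reduces to one semantic fact: (Refl) to reflexivity, (Tran) to
transitivity, (Sym1)/(Sym2) to the excluded-middle law that symmetry gives for
\<open>(\<phi> \<to> \<psi>) \<to> \<bottom>\<close>, and the propositional-variable rules to the persistence of
propositions, i.e. of sets \<open>X\<close> with \<open>R[X] \<inter> R\<^sup>\<box>(R[X]) \<subseteq> X\<close>, along \<open>R\<close>.\<close>

definition fits_logic :: "logic \<Rightarrow> 'w set \<Rightarrow> ('w \<times> 'w) set \<Rightarrow> (nat \<Rightarrow> 'w set) \<Rightarrow> bool" where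
  "fits_logic L W R V \<longleftrightarrow> is_model W R V
     \<and> (has_refl L \<longrightarrow> refl_on W R) \<and> (has_tran L \<longrightarrow> trans R) \<and> (has_sym L \<longrightarrow> sym R)
     \<and> (has_prop_minus L \<longrightarrow> (\<forall>p. V p \<subseteq> Rbox W R ((W - Rbox W R {}) \<union> V p)))
     \<and> (has_prop_tr L \<or> has_prop_sy L \<longrightarrow> (\<forall>p. is_proposition W R (V p)))"

lemma has_tran_if_has_prop_tr: "has_prop_tr L \<Longrightarrow> has_tran L"
  by (cases L) simp_all

lemma has_sym_if_has_prop_sy: "has_prop_sy L \<Longrightarrow> has_sym L"
  by (cases L) simp_all

lemma sat_Top [simp]: "sat W R V s Top"
  by (simp add: Top_def)

lemma sat_Imp_Top_trans:
  assumes "trans R" "sat W R V s (Imp \<phi> \<psi>)"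
  shows "sat W R V s (Imp Top (Imp \<phi> \<psi>))"
  using assms unfolding trans_def by auto

lemma sat_or_sat_neg_Imp_sym:
  assumes "sym R" "sat W R V s \<phi>"
  shows "sat W R V s \<psi> \<or> sat W R V s (Imp (Imp \<phi> \<psi>) Bot)"
  using assms by (auto dest: symD)

lemma proposition_persistent:
  assumes "is_proposition W R X" "s \<in> X" "(s, t) \<in> R" "t \<in> W"
    and "\<And>u. (t, u) \<in> R \<Longrightarrow> u \<in> Rimg R X"
  shows "t \<in> X"
proof -
  have "t \<in> Rimg R X" using assms(2,3) by (auto simp: Rimg_def)
  moreover have "t \<in> Rbox W R (Rimg R X)" using assms(4,5) by (simp add: Rbox_def)
  ultimately show ?thesis using assms(1) by (auto simp: is_proposition_def)
qed

lemma proposition_persistent_trans: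
  assumes "is_proposition W R X" "trans R" "s \<in> X" "(s, t) \<in> R" "t \<in> W"
  shows "t \<in> X"
  by (rule proposition_persistent[OF assms(1,3-5)]) (use assms(2-4) in \<open>auto simp: Rimg_def dest: transD\<close>)

lemma proposition_persistent_sym:
  assumes "is_proposition W R X" "sym R" "s \<in> X" "(s, t) \<in> R" "t \<in> W"
    and "\<And>u. (t, u) \<in> R \<Longrightarrow> \<exists>v. (u, v) \<in> R \<and> v \<in> X"
  shows "t \<in> X"
proof (rule proposition_persistent[OF assms(1,3-5)])
  fix u assume "(t, u) \<in> R"
  then obtain v where "(u, v) \<in> R" "v \<in> X" using assms(6) by blast
  then show "u \<in> Rimg R X" using \<open>sym R\<close> by (auto simp: Rimg_def dest: symD)
qed

lemma refl_on_Rbox_empty: "refl_on W R \<Longrightarrow> Rbox W R {} = {}"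
  by (auto simp: Rbox_def refl_on_def)

lemma Rbox_carrier: "R \<subseteq> W \<times> W \<Longrightarrow> Rbox W R W = W"
  by (auto simp: Rbox_def)

lemma deriv_sound:
  assumes "deriv L \<Gamma> \<phi>" "fits_logic L W R V" "s \<in> W" "\<forall>\<gamma>\<in>\<Gamma>. sat W R V s \<gamma>"
  shows "sat W R V s \<phi>"
  using assms
proof (induction arbitrary: s rule: deriv.induct)
  case (Imp1 \<Gamma> \<phi> \<psi>)
  have "sat W R V t \<phi>" if "(s, t) \<in> R" "sat W R V t \<psi>" for t
  proof (rule Imp1.IH[OF Imp1.prems(1)])
    show "t \<in> W" using \<open>(s, t) \<in> R\<close> Imp1.prems(1) unfolding fits_logic_def is_model_def by blast
    show "\<forall>\<gamma>\<in>\<Gamma>. sat W R V t \<gamma>" using that Imp1.prems(3) by fastforce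
  qed
  then show ?case by simp
next
  case (Refl \<phi> \<psi>)
  then have "(s, s) \<in> R" unfolding fits_logic_def by (blast dest: refl_onD)
  with Refl show ?case by auto
next
  case (Tran \<phi> \<psi>)
  then have "trans R" unfolding fits_logic_def by blast
  moreover have "sat W R V s (Imp \<phi> \<psi>)" using Tran.prems(3) by simp
  ultimately show ?case by (rule sat_Imp_Top_trans)
next
  case (Sym1 \<Gamma> \<psi> \<chi> \<phi>)
  have "sym R" using Sym1.hyps(1) Sym1.prems(1) unfolding fits_logic_def by blast
  with Sym1.prems(3) have "sat W R V s \<psi> \<or> sat W R V s (Imp (Imp \<phi> \<psi>) Bot)"
    by (simp add: sat_or_sat_neg_Imp_sym del: sat.simps)
  moreover have "\<forall>\<gamma>\<in>\<Gamma>. sat W R V s \<gamma>" using Sym1.prems(3) by simp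
  ultimately show ?case
    using Sym1.IH[OF Sym1.prems(1,2)] by (auto simp del: sat.simps)
next
  case (Sym2 \<alpha> \<psi> \<chi> \<phi>)
  then have "sym R" unfolding fits_logic_def by blast
  have "sat W R V t \<chi>" if "(s, t) \<in> R" "sat W R V t \<alpha>" "sat W R V t \<phi>" for t
    using sat_or_sat_neg_Imp_sym[OF \<open>sym R\<close> \<open>sat W R V t \<phi>\<close>, of \<psi>] that Sym2.prems(3)
    by (metis insert_iff sat.simps(3,4))
  then show ?case by simp
next
  case (PropMinus p)
  then have "V p \<subseteq> Rbox W R ((W - Rbox W R {}) \<union> V p)" "R \<subseteq> W \<times> W"
    unfolding fits_logic_def is_model_def by blast+
  with PropMinus.prems(3) show ?case by (auto simp: Rbox_def)
next
  case (PropTr p)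
  with has_tran_if_has_prop_tr have "is_proposition W R (V p)" "trans R" "R \<subseteq> W \<times> W"
    unfolding fits_logic_def is_model_def by blast+
  with PropTr.prems(3) show ?case by (auto intro: proposition_persistent_trans)
next
  case (PropSy p)
  with has_sym_if_has_prop_sy have "is_proposition W R (V p)" "sym R" "R \<subseteq> W \<times> W"
    unfolding fits_logic_def is_model_def by blast+
  with PropSy.prems(3) show ?case by (auto intro: proposition_persistent_sym)
next
  case (Mon \<Gamma> \<Delta> \<phi>)
  then show ?case by blast
next
  case (Cut \<Gamma> \<psi> \<phi> \<Delta>)
  then show ?case by simp
next
  case (Imp2 \<phi> \<psi> \<chi>)
  then show ?case by simp
qed simp_all

lemma conseq_if_fits_logic:
  assumes "\<And>W R V. D W R V \<Longrightarrow> fits_logic L W R V" "deriv L \<Gamma> \<phi>"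
  shows "conseq D \<Gamma> \<phi>"
  unfolding conseq_def using deriv_sound[OF assms(2) assms(1)] by blast

lemma D_Pminus_fits_Kp: "D_Pminus W R V \<Longrightarrow> fits_logic Kp W R V"
  by (simp add: fits_logic_def D_Pminus_def)

lemma D_re_fits_Tp: "D_re W R V \<Longrightarrow> fits_logic Tp W R V"
proof -
  assume "D_re W R V"
  then have "is_model W R V" "refl_on W R" by (simp_all add: D_re_def)
  then have "V p \<subseteq> Rbox W R ((W - Rbox W R {}) \<union> V p)" for p
    by (auto simp: is_model_def refl_on_Rbox_empty Rbox_carrier Un_absorb2)
  with \<open>is_model W R V\<close> \<open>refl_on W R\<close> show ?thesis by (simp add: fits_logic_def)
qed

lemma D_Bp_fits_Bp: "D_Bp W R V \<Longrightarrow> fits_logic Bp W R V"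
  by (simp add: fits_logic_def D_Bp_def is_interpretation_def)

lemma D_V_fits_Vl: "D_V W R V \<Longrightarrow> fits_logic Vl W R V"
  by (simp add: fits_logic_def D_V_def is_interpretation_def)

lemma D_KB4p_fits_KB4p: "D_KB4p W R V \<Longrightarrow> fits_logic KB4p W R V"
  by (simp add: fits_logic_def D_KB4p_def is_interpretation_def)

lemma D_I_fits_Il: "D_I W R V \<Longrightarrow> fits_logic Il W R V"
  by (simp add: fits_logic_def D_I_def is_interpretation_def)

lemma D_O_fits_Ol: "D_O W R V \<Longrightarrow> fits_logic Ol W R V"
  by (simp add: fits_logic_def D_O_def is_interpretation_def)

lemma D_C_fits_Cl: "D_C W R V \<Longrightarrow> fits_logic Cl W R V"
  by (simp add: fits_logic_def D_C_def is_interpretation_def)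

theorem mainTheorem5:
  fixes \<Gamma> :: "form set" and \<phi> :: form
  shows "(deriv Kp \<Gamma> \<phi> \<longrightarrow> conseq (D_Pminus :: 'w set \<Rightarrow> _) \<Gamma> \<phi>)
       \<and> (deriv Tp \<Gamma> \<phi> \<longrightarrow> conseq (D_re :: 'w set \<Rightarrow> _) \<Gamma> \<phi>)
       \<and> (deriv Bp \<Gamma> \<phi> \<longrightarrow> conseq (D_Bp :: 'w set \<Rightarrow> _) \<Gamma> \<phi>)
       \<and> (deriv Vl \<Gamma> \<phi> \<longrightarrow> conseq (D_V :: 'w set \<Rightarrow> _) \<Gamma> \<phi>)
       \<and> (deriv KB4p \<Gamma> \<phi> \<longrightarrow> conseq (D_KB4p :: 'w set \<Rightarrow> _) \<Gamma> \<phi>)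
       \<and> (deriv Il \<Gamma> \<phi> \<longrightarrow> conseq (D_I :: 'w set \<Rightarrow> _) \<Gamma> \<phi>)
       \<and> (deriv Ol \<Gamma> \<phi> \<longrightarrow> conseq (D_O :: 'w set \<Rightarrow> _) \<Gamma> \<phi>)
       \<and> (deriv Cl \<Gamma> \<phi> \<longrightarrow> conseq (D_C :: 'w set \<Rightarrow> _) \<Gamma> \<phi>)"
proof (intro conjI impI)
qed (erule conseq_if_fits_logic[rotated],
     erule D_Pminus_fits_Kp D_re_fits_Tp D_Bp_fits_Bp D_V_fits_Vl D_KB4p_fits_KB4p
       D_I_fits_Il D_O_fits_Ol D_C_fits_Cl)+

end
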